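(* Let $M$ be a closed manifold immersed in $(V,\omega)=(\mathbb{R}^{2d},\sum_i dx_i\wedge dy_i)$ with $\dim M\ge d$. Then $M$ satisfies condition (LL): for every $P\in V$ there exists a point $x\in M$ such that $T_xM\not\subset(x-P)^\omega$.
   Context: Points of $M$ are identified with their images and $T_xM\subset V$ is the tangent space at $x$. For $u\in V$, $u^\omega=\{\xi\in V:\omega(\xi,u)=0\}$ is the symplectic complement of the line $\mathbb{R}u$. *)

theory Defs
  imports "HOL-Analysis.Analysis"
begin

type_synonym 'd symp_vec = "(real^'d) \<times> (real^'d)"

definition omega :: "'d::finite symp_vec \<Rightarrow> 'd symp_vec \<Rightarrow> real" where
  "omega u v = (\<Sum>i\<in>UNIV. fst u $ i * snd v $ i - snd u $ i * fst v $ i)"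

definition symp_compl :: "'d::finite symp_vec \<Rightarrow> 'd symp_vec set" where
  "symp_compl u = {\<xi>. omega \<xi> u = 0}"

text \<open>C-infinity on an open set U of R^m: a family F of iterated partial derivatives,
  F [] = g on U, and each F is is differentiable with partial derivative in direction e_i
  equal to F (i # is).\<close>
definition smooth_on :: "(real^'m::finite) set \<Rightarrow> (real^'m \<Rightarrow> 'b::real_normed_vector) \<Rightarrow> bool" where
  "smooth_on U g \<longleftrightarrow> (\<exists>F :: 'm list \<Rightarrow> real^'m \<Rightarrow> 'b.
      (\<forall>x\<in>U. F [] x = g x) \<and>
      (\<forall>is. \<forall>x\<in>U. (F is has_derivative (\<lambda>h. \<Sum>i\<in>UNIV. (h $ i) *\<^sub>R F (i # is) x)) (at x)))"

text \<open>A closed (compact, boundaryless, nonempty) smooth manifold X of dimension CARD('m),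
  given by an atlas A of charts (U, phi) with U open in R^m and phi a homeomorphism of U onto
  an open subset of X, together with a smooth immersion f : X -> V (smoothness of the manifold
  structure is the one induced by f: each f o phi is a smooth immersion).\<close>
definition closed_immersed_manifold ::
  "'a topology \<Rightarrow> ((real^'m::finite) set \<times> (real^'m \<Rightarrow> 'a)) set \<Rightarrow> ('a \<Rightarrow> 'd::finite symp_vec) \<Rightarrow> bool" where
  "closed_immersed_manifold X A f \<longleftrightarrow>
     compact_space X \<and> Hausdorff_space X \<and> topspace X \<noteq> {} \<and>
     topspace X = (\<Union>(U, \<phi>)\<in>A. \<phi> ` U) \<and>
     (\<forall>(U, \<phi>)\<in>A.
        open U \<and> openin X (\<phi> ` U) \<and>
        homeomorphic_map (subtopology euclidean U) (subtopology X (\<phi> ` U)) \<phi> \<and>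
        smooth_on U (f \<circ> \<phi>) \<and>
        (\<forall>u\<in>U. \<exists>D. ((f \<circ> \<phi>) has_derivative D) (at u) \<and> inj D))"

definition tangent_space ::
  "((real^'m::finite) set \<times> (real^'m \<Rightarrow> 'a)) set \<Rightarrow> ('a \<Rightarrow> 'd::finite symp_vec) \<Rightarrow> 'a \<Rightarrow> 'd symp_vec set" where
  "tangent_space A f p = {\<xi>. \<exists>(U, \<phi>)\<in>A. \<exists>u\<in>U. \<phi> u = p \<and>
       (\<exists>D. ((f \<circ> \<phi>) has_derivative D) (at u) \<and> \<xi> \<in> range D)}"

definition condition_LL ::
  "'a topology \<Rightarrow> ((real^'m::finite) set \<times> (real^'m \<Rightarrow> 'a)) set \<Rightarrow> ('a \<Rightarrow> 'd::finite symp_vec) \<Rightarrow> bool" where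
  "condition_LL X A f \<longleftrightarrow> (\<forall>P. \<exists>x\<in>topspace X. \<not> tangent_space A f x \<subseteq> symp_compl (f x - P))"

end

theory Submission
  imports Defs
begin

(* If every tangent space T_xM lies in (x - P)^omega, then the 1-form omega(-, x - P) vanishes
   on M; differentiating this identity and using the symmetry of second derivatives shows that
   M is isotropic, hence Lagrangian because dim M >= d. A vector omega-orthogonal to a
   Lagrangian subspace lies in it, so x - P is tangent to M at every point. At a point of M
   farthest from P, however, x - P is Euclidean-orthogonal to T_xM, so it vanishes; then all of
   M is mapped to P, which an immersion cannot do. *)

definition symp_J :: "'d::finite symp_vec \<Rightarrow> 'd symp_vec" where
  "symp_J v = (snd v, - fst v)"

lemma omega_eq_inner_symp_J: "omega u v = u \<bullet> symp_J v"
  by (cases u; cases v)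
     (simp add: omega_def symp_J_def inner_vec_def sum_subtractf sum_negf algebra_simps)

lemma linear_symp_J: "linear symp_J"
  unfolding symp_J_def by (intro linearI) (auto simp: algebra_simps)

lemma inj_symp_J: "inj symp_J"
  by (auto simp: inj_def symp_J_def prod_eq_iff)

lemma bounded_bilinear_omega: "bounded_bilinear omega"
  unfolding omega_eq_inner_symp_J[abs_def]
  by (rule bounded_bilinear.comp[OF bounded_bilinear_inner bounded_linear_ident])
     (simp add: linear_symp_J linear_conv_bounded_linear[symmetric])

lemma omega_antisym: "omega u v = - omega v u"
  by (simp add: omega_def sum_negf[symmetric] algebra_simps)

definition symp_isotropic :: "'d::finite symp_vec set \<Rightarrow> bool" where
  "symp_isotropic W \<longleftrightarrow> (\<forall>u\<in>W. \<forall>v\<in>W. omega u v = 0)"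

lemma symp_isotropic_maximal:
  fixes W :: "'d::finite symp_vec set"
  assumes "subspace W" "symp_isotropic W" "CARD('d) \<le> dim W"
    and "\<And>u. u \<in> W \<Longrightarrow> omega u v = 0"
  shows "v \<in> W"
proof -
  \<comment> \<open>Isotropy says J W \<subseteq> W-perp, and the dimensions force equality because dim W \<ge> d.\<close>
  let ?Wperp = "{y. \<forall>x\<in>W. orthogonal x y}"
  have "dim ?Wperp + dim W = 2 * CARD('d)"
    using dim_subspace_orthogonal_to_vectors[of W UNIV] \<open>subspace W\<close> by simp
  moreover have "dim (symp_J ` W) = dim W"
    using dim_image_eq[OF linear_symp_J] inj_symp_J by (metis inj_on_subset top_greatest)
  moreover have "symp_J ` W \<subseteq> ?Wperp"
    using \<open>symp_isotropic W\<close> by (auto simp: symp_isotropic_def orthogonal_def omega_eq_inner_symp_J)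
  ultimately have "symp_J ` W = ?Wperp"
    using assms(3) \<open>subspace W\<close>
    by (intro subspace_dim_equal linear_subspace_image[OF linear_symp_J]
        subspace_orthogonal_to_vectors) auto
  moreover have "symp_J v \<in> ?Wperp"
    using assms(4) by (auto simp: orthogonal_def omega_eq_inner_symp_J)
  ultimately show ?thesis
    by (metis inj_image_mem_iff inj_symp_J)
qed

lemma has_real_derivative_along_line:
  fixes q :: "'a::real_normed_vector \<Rightarrow> real"
  assumes "(q has_derivative Q) (at (x + s *\<^sub>R a))"
  shows "((\<lambda>t. q (x + t *\<^sub>R a)) has_real_derivative Q a) (at s)"
proof -
  have "((\<lambda>t. q (x + t *\<^sub>R a)) has_derivative (\<lambda>t. Q (t *\<^sub>R a))) (at s)"
    by (rule has_derivative_compose[where f = "\<lambda>t. x + t *\<^sub>R a", OF _ assms])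
       (auto intro!: derivative_eq_intros)
  moreover have "(\<lambda>t. Q (t *\<^sub>R a)) = (*) (Q a)"
    using has_derivative_linear[OF assms] by (auto simp: linear_scale)
  ultimately show ?thesis
    by (simp add: has_field_derivative_def)
qed

lemma second_difference_mean_value:
  fixes p :: "'a::real_normed_vector \<Rightarrow> real"
  assumes dp: "\<And>x. x \<in> U \<Longrightarrow> (p has_derivative P x) (at x)"
    and dPa: "\<And>x. x \<in> U \<Longrightarrow> ((\<lambda>y. P y a) has_derivative Pa x) (at x)"
    and "0 < h"
    and square: "\<And>s t. 0 \<le> s \<Longrightarrow> s \<le> h \<Longrightarrow> 0 \<le> t \<Longrightarrow> t \<le> h \<Longrightarrow> u + s *\<^sub>R a + t *\<^sub>R b \<in> U"
  obtains \<sigma> \<tau> where "0 < \<sigma>" "\<sigma> < h" "0 < \<tau>" "\<tau> < h"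
    and "p (u + h *\<^sub>R a + h *\<^sub>R b) - p (u + h *\<^sub>R a) - p (u + h *\<^sub>R b) + p u
           = h * h * Pa (u + \<sigma> *\<^sub>R a + \<tau> *\<^sub>R b) b"
proof -
  let ?\<phi> = "\<lambda>s. p (u + h *\<^sub>R b + s *\<^sub>R a) - p (u + s *\<^sub>R a)"
  have "\<exists>\<sigma>>0. \<sigma> < h \<and> ?\<phi> h - ?\<phi> 0 = (h - 0) * (P (u + h *\<^sub>R b + \<sigma> *\<^sub>R a) a - P (u + \<sigma> *\<^sub>R a) a)"
  proof (rule MVT2[OF \<open>0 < h\<close>])
    fix s assume s: "0 \<le> s" "s \<le> h"
    have "u + h *\<^sub>R b + s *\<^sub>R a \<in> U" "u + s *\<^sub>R a \<in> U"
      using square[OF s, of h] square[OF s, of 0] \<open>0 < h\<close> by (simp_all add: algebra_simps)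
    then show "(?\<phi> has_real_derivative P (u + h *\<^sub>R b + s *\<^sub>R a) a - P (u + s *\<^sub>R a) a) (at s)"
      by (intro DERIV_diff has_real_derivative_along_line dp)
  qed
  then obtain \<sigma> where \<sigma>: "0 < \<sigma>" "\<sigma> < h"
    and mvt1: "?\<phi> h - ?\<phi> 0 = h * (P (u + \<sigma> *\<^sub>R a + h *\<^sub>R b) a - P (u + \<sigma> *\<^sub>R a) a)"
    by (auto simp: algebra_simps)
  let ?\<psi> = "\<lambda>t. P (u + \<sigma> *\<^sub>R a + t *\<^sub>R b) a"
  have "\<exists>\<tau>>0. \<tau> < h \<and> ?\<psi> h - ?\<psi> 0 = (h - 0) * Pa (u + \<sigma> *\<^sub>R a + \<tau> *\<^sub>R b) b"
  proof (rule MVT2[OF \<open>0 < h\<close>])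
    fix t assume "0 \<le> t" "t \<le> h"
    then show "(?\<psi> has_real_derivative Pa (u + \<sigma> *\<^sub>R a + t *\<^sub>R b) b) (at t)"
      using \<sigma> by (intro has_real_derivative_along_line[where q = "\<lambda>y. P y a"] dPa square) auto
  qed
  then obtain \<tau> where "0 < \<tau>" "\<tau> < h" and mvt2: "?\<psi> h - ?\<psi> 0 = h * Pa (u + \<sigma> *\<^sub>R a + \<tau> *\<^sub>R b) b"
    by auto
  have "p (u + h *\<^sub>R a + h *\<^sub>R b) - p (u + h *\<^sub>R a) - p (u + h *\<^sub>R b) + p u = ?\<phi> h - ?\<phi> 0"
    by (simp add: algebra_simps)
  also have "\<dots> = h * h * Pa (u + \<sigma> *\<^sub>R a + \<tau> *\<^sub>R b) b"
    using mvt1 mvt2 by simp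
  finally show ?thesis
    using that \<sigma> \<open>0 < \<tau>\<close> \<open>\<tau> < h\<close> by blast
qed

lemma mixed_partials_symmetric:
  fixes p :: "'a::real_normed_vector \<Rightarrow> real"
  assumes "open U" "u \<in> U"
    and dp: "\<And>x. x \<in> U \<Longrightarrow> (p has_derivative P x) (at x)"
    and dPa: "\<And>x. x \<in> U \<Longrightarrow> ((\<lambda>y. P y a) has_derivative Pa x) (at x)"
    and dPb: "\<And>x. x \<in> U \<Longrightarrow> ((\<lambda>y. P y b) has_derivative Pb x) (at x)"
    and "isCont (\<lambda>x. Pa x b) u" "isCont (\<lambda>x. Pb x a) u"
  shows "Pa u b = Pb u a"
proof -
  have "\<bar>Pa u b - Pb u a\<bar> < 2 * e" if "e > 0" for e
  proof -
    obtain r where "r > 0" "ball u r \<subseteq> U"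
      and close: "\<And>x. x \<in> ball u r \<Longrightarrow> \<bar>Pa x b - Pa u b\<bar> < e \<and> \<bar>Pb x a - Pb u a\<bar> < e"
    proof -
      obtain r0 where "r0 > 0" "ball u r0 \<subseteq> U"
        using \<open>open U\<close> \<open>u \<in> U\<close> open_contains_ball by blast
      moreover obtain ra where "ra > 0" "\<And>x. dist x u < ra \<Longrightarrow> \<bar>Pa x b - Pa u b\<bar> < e"
        using \<open>isCont (\<lambda>x. Pa x b) u\<close> \<open>e > 0\<close> by (auto simp: continuous_at_eps_delta dist_real_def)
      moreover obtain rb where "rb > 0" "\<And>x. dist x u < rb \<Longrightarrow> \<bar>Pb x a - Pb u a\<bar> < e"
        using \<open>isCont (\<lambda>x. Pb x a) u\<close> \<open>e > 0\<close> by (auto simp: continuous_at_eps_delta dist_real_def)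
      ultimately show thesis
        by (intro that[of "min r0 (min ra rb)"]) (auto simp: dist_commute)
    qed
    define K where "K = norm a + norm b + 1"
    have "K > 0"
      by (simp add: K_def add_nonneg_pos)
    define h where "h = r / K"
    have "h > 0"
      using \<open>r > 0\<close> \<open>K > 0\<close> by (simp add: h_def)
    have square: "u + s *\<^sub>R a + t *\<^sub>R b \<in> ball u r" if "0 \<le> s" "s \<le> h" "0 \<le> t" "t \<le> h" for s t
    proof -
      have "norm (s *\<^sub>R a + t *\<^sub>R b) \<le> h * norm a + h * norm b"
        using that norm_triangle_ineq[of "s *\<^sub>R a" "t *\<^sub>R b"]
        by (smt (verit) mult_right_mono norm_ge_zero norm_scaleR)
      also have "\<dots> < h * K"
        using \<open>h > 0\<close> by (simp add: K_def distrib_left)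
      also have "\<dots> = r"
        using \<open>K > 0\<close> by (simp add: h_def)
      finally show ?thesis
        by (simp add: dist_norm norm_minus_commute add.commute)
    qed
    have square_ab: "u + s *\<^sub>R a + t *\<^sub>R b \<in> U"
      and square_ba: "u + t *\<^sub>R b + s *\<^sub>R a \<in> U"
      if "0 \<le> s" "s \<le> h" "0 \<le> t" "t \<le> h" for s t
      using square[OF that] \<open>ball u r \<subseteq> U\<close> by (auto simp: algebra_simps)
    obtain \<sigma> \<tau> where "0 < \<sigma>" "\<sigma> < h" "0 < \<tau>" "\<tau> < h"
      and E1: "p (u + h *\<^sub>R a + h *\<^sub>R b) - p (u + h *\<^sub>R a) - p (u + h *\<^sub>R b) + p u
                 = h * h * Pa (u + \<sigma> *\<^sub>R a + \<tau> *\<^sub>R b) b"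
      using second_difference_mean_value[OF dp dPa \<open>h > 0\<close> square_ab] by blast
    obtain \<sigma>' \<tau>' where "0 < \<sigma>'" "\<sigma>' < h" "0 < \<tau>'" "\<tau>' < h"
      and E2: "p (u + h *\<^sub>R b + h *\<^sub>R a) - p (u + h *\<^sub>R b) - p (u + h *\<^sub>R a) + p u
                 = h * h * Pb (u + \<sigma>' *\<^sub>R b + \<tau>' *\<^sub>R a) a"
      using second_difference_mean_value[OF dp dPb \<open>h > 0\<close> square_ba] by blast
    have "Pa (u + \<sigma> *\<^sub>R a + \<tau> *\<^sub>R b) b = Pb (u + \<tau>' *\<^sub>R a + \<sigma>' *\<^sub>R b) a"
      using E1 E2 \<open>h > 0\<close> by (simp add: algebra_simps)
    moreover have "u + \<sigma> *\<^sub>R a + \<tau> *\<^sub>R b \<in> ball u r" "u + \<tau>' *\<^sub>R a + \<sigma>' *\<^sub>R b \<in> ball u r"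
      using square \<open>0 < \<sigma>\<close> \<open>\<sigma> < h\<close> \<open>0 < \<tau>\<close> \<open>\<tau> < h\<close> \<open>0 < \<sigma>'\<close> \<open>\<sigma>' < h\<close> \<open>0 < \<tau>'\<close> \<open>\<tau>' < h\<close>
      by auto
    ultimately show ?thesis
      using close by (smt (verit))
  qed
  from this[of "\<bar>Pa u b - Pb u a\<bar> / 2"] show ?thesis
    by force
qed

lemma sum_axis_scaleR: "(\<Sum>k\<in>UNIV. axis i (1::real) $ k *\<^sub>R F k) = (F i :: 'b::real_vector)"
proof -
  have "axis i (1::real) $ k *\<^sub>R F k = (if k = i then F k else 0)" for k
    by (simp add: axis_def)
  then show ?thesis
    by simp
qed

lemma second_partials_symmetric:
  fixes F :: "'m list \<Rightarrow> real^'m::finite \<Rightarrow> 'b::real_inner"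
  assumes U: "open U" "u \<in> U"
    and FD: "\<And>is x. x \<in> U \<Longrightarrow> (F is has_derivative (\<lambda>h. \<Sum>k\<in>UNIV. h $ k *\<^sub>R F (k # is) x)) (at x)"
  shows "F [i, j] u = F [j, i] u"
proof -
  have "F [j, i] u \<bullet> v = F [i, j] u \<bullet> v" for v
  proof -
    have dF: "((\<lambda>x. F is x \<bullet> v) has_derivative (\<lambda>h. (\<Sum>k\<in>UNIV. h $ k *\<^sub>R F (k # is) x) \<bullet> v)) (at x)"
      if "x \<in> U" for "is" x
      by (rule bounded_linear.has_derivative[OF bounded_linear_inner_left FD[OF that]])
    have cont: "isCont (\<lambda>x. F is x \<bullet> v) u" for "is"
      using dF[OF U(2)] has_derivative_continuous by blast
    show ?thesis
      using mixed_partials_symmetric[OF U dF[of _ "[]"], where a = "axis i 1" and b = "axis j 1"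
          and Pa = "\<lambda>x h. (\<Sum>k\<in>UNIV. h $ k *\<^sub>R F [k, i] x) \<bullet> v"
          and Pb = "\<lambda>x h. (\<Sum>k\<in>UNIV. h $ k *\<^sub>R F [k, j] x) \<bullet> v"]
        dF[of _ "[i]"] dF[of _ "[j]"] cont
      by (simp add: sum_axis_scaleR)
  qed
  then have "(F [i, j] u - F [j, i] u) \<bullet> v = 0" for v
    by (simp add: inner_diff_left)
  from this[of "F [i, j] u - F [j, i] u"] show ?thesis
    by simp
qed

lemma symp_isotropic_derivative_if_radially_orthogonal:
  fixes g :: "real^'m::finite \<Rightarrow> 'd::finite symp_vec"
  assumes U: "open U" "u \<in> U" and "smooth_on U g"
    and radial: "\<And>x D' h. x \<in> U \<Longrightarrow> (g has_derivative D') (at x) \<Longrightarrow> omega (D' h) (g x - P) = 0"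
    and dg: "(g has_derivative D) (at u)"
  shows "symp_isotropic (range D)"
proof -
  obtain F :: "'m list \<Rightarrow> real^'m \<Rightarrow> 'd symp_vec" where F0: "\<And>x. x \<in> U \<Longrightarrow> F [] x = g x"
    and FD: "\<And>is x. x \<in> U \<Longrightarrow> (F is has_derivative (\<lambda>h. \<Sum>k\<in>UNIV. h $ k *\<^sub>R F (k # is) x)) (at x)"
    using \<open>smooth_on U g\<close> unfolding smooth_on_def by blast
  have dg_F: "(g has_derivative (\<lambda>h. \<Sum>k\<in>UNIV. h $ k *\<^sub>R F [k] x)) (at x)" if "x \<in> U" for x
    by (rule has_derivative_transform_within_open[OF FD[OF that] U(1) that]) (use F0 in auto)
  have radial_F: "omega (F [i] x) (F [] x - P) = 0" if "x \<in> U" for x i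
    using radial[OF that dg_F[OF that], of "axis i 1"] F0[OF that] by (simp add: sum_axis_scaleR)
  have diff: "omega (F [i] u) (F [j] u) + omega (F [j, i] u) (g u - P) = 0" for i j
  proof -
    let ?d = "\<lambda>h. omega (F [i] u) (\<Sum>k\<in>UNIV. h $ k *\<^sub>R F [k] u)
                  + omega (\<Sum>k\<in>UNIV. h $ k *\<^sub>R F [k, i] u) (F [] u - P)"
    have "((\<lambda>x. omega (F [i] x) (F [] x - P)) has_derivative ?d) (at u)"
      by (rule bounded_bilinear.FDERIV[OF bounded_bilinear_omega FD[OF U(2)]])
         (auto intro!: derivative_eq_intros FD[OF U(2)])
    moreover have "((\<lambda>x. omega (F [i] x) (F [] x - P)) has_derivative (\<lambda>h. 0)) (at u)"
      by (rule has_derivative_transform_within_open[OF has_derivative_const U]) (simp add: radial_F)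
    ultimately have "?d = (\<lambda>h. 0)"
      by (rule has_derivative_unique)
    from fun_cong[OF this, of "axis j 1"] show ?thesis
      using F0[OF U(2)] by (simp add: sum_axis_scaleR)
  qed
  have basis: "omega (F [i] u) (F [j] u) = 0" for i j
  proof -
    have "omega (F [i, j] u) (g u - P) = omega (F [j, i] u) (g u - P)"
      by (simp add: second_partials_symmetric[OF U FD])
    then show ?thesis
      using diff[of i j] diff[of j i] omega_antisym[of "F [i] u" "F [j] u"] by linarith
  qed
  have "D = (\<lambda>h. \<Sum>k\<in>UNIV. h $ k *\<^sub>R F [k] u)"
    by (rule has_derivative_unique[OF dg dg_F[OF U(2)]])
  then show ?thesis
    by (auto simp: symp_isotropic_def basis
        bounded_bilinear.sum_left[OF bounded_bilinear_omega] bounded_bilinear.sum_right[OF bounded_bilinear_omega]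
        bounded_bilinear.scaleR_left[OF bounded_bilinear_omega] bounded_bilinear.scaleR_right[OF bounded_bilinear_omega])
qed

lemma radial_vector_mem_derivative_range:
  fixes g :: "real^'m::finite \<Rightarrow> 'd::finite symp_vec"
  assumes U: "open U" "u \<in> U" and "smooth_on U g"
    and radial: "\<And>x D' h. x \<in> U \<Longrightarrow> (g has_derivative D') (at x) \<Longrightarrow> omega (D' h) (g x - P) = 0"
    and dg: "(g has_derivative D) (at u)" and "inj D" and "CARD('d) \<le> CARD('m)"
  shows "g u - P \<in> range D"
proof (rule symp_isotropic_maximal)
  have "linear D"
    using dg has_derivative_linear by blast
  then show "subspace (range D)"
    by (rule linear_subspace_image[OF _ subspace_UNIV])
  have "dim (range D) = CARD('m)"
    using dim_image_eq[OF \<open>linear D\<close>, of UNIV] \<open>inj D\<close> by (simp add: inj_on_def inj_def)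
  then show "CARD('d) \<le> dim (range D)"
    using \<open>CARD('d) \<le> CARD('m)\<close> by simp
  show "symp_isotropic (range D)"
    using symp_isotropic_derivative_if_radially_orthogonal[OF U \<open>smooth_on U g\<close> _ dg] radial
    by blast
  show "omega w (g u - P) = 0" if "w \<in> range D" for w
    using radial[OF U(2) dg] that by auto
qed

lemma compact_space_attains_max:
  fixes h :: "'a \<Rightarrow> real"
  assumes "compact_space X" "topspace X \<noteq> {}" "continuous_map X euclidean h"
  obtains x where "x \<in> topspace X" "\<And>y. y \<in> topspace X \<Longrightarrow> h y \<le> h x"
proof -
  have "compact (h ` topspace X)"
    using image_compactin[OF _ assms(3)] assms(1) by (simp add: compact_space_def)
  then show thesis
    using compact_attains_sup[of "h ` topspace X"] assms(2) that by auto
qed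

lemma local_max_norm_diff_orthogonal:
  fixes g :: "'a::real_normed_vector \<Rightarrow> 'b::real_inner"
  assumes dg: "(g has_derivative D) (at u)" and "open U" "u \<in> U"
    and max: "\<And>y. y \<in> U \<Longrightarrow> norm (g y - c) \<le> norm (g u - c)"
  shows "(g u - c) \<bullet> D h = 0"
proof -
  have "((\<lambda>y. (g y - c) \<bullet> (g y - c)) has_derivative (\<lambda>k. (g u - c) \<bullet> D k + D k \<bullet> (g u - c))) (at u)"
    by (auto intro!: derivative_eq_intros dg)
  moreover have "eventually (\<lambda>y. (g y - c) \<bullet> (g y - c) \<le> (g u - c) \<bullet> (g u - c)) (at u)"
    using eventually_at_in_open'[OF \<open>open U\<close> \<open>u \<in> U\<close>] by eventually_elim (use max norm_le in blast)
  ultimately have "(\<lambda>k. (g u - c) \<bullet> D k + D k \<bullet> (g u - c)) = (\<lambda>k. 0)"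
    by (rule has_derivative_local_max)
  from fun_cong[OF this, of h] show ?thesis
    by (simp add: inner_commute)
qed

lemma inj_derivative_not_constant_on:
  fixes g :: "'a::euclidean_space \<Rightarrow> 'b::real_normed_vector"
  assumes "(g has_derivative D) (at u)" "inj D" "open U" "u \<in> U"
  shows "\<exists>x\<in>U. g x \<noteq> c"
proof (rule ccontr)
  assume "\<not> (\<exists>x\<in>U. g x \<noteq> c)"
  then have "((\<lambda>_. c) has_derivative D) (at u)"
    using has_derivative_transform_within_open[OF assms(1,3,4)] by auto
  then have "D = (\<lambda>_. 0)"
    by (rule has_derivative_unique[OF _ has_derivative_const])
  moreover obtain b :: 'a where "b \<in> Basis"
    using nonempty_Basis by blast
  ultimately show False
    using \<open>inj D\<close> nonzero_Basis by (metis injD)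
qed

lemma closed_immersed_manifold_chartD:
  assumes "closed_immersed_manifold X A f" "(U, \<phi>) \<in> A"
  shows "open U" "openin X (\<phi> ` U)" "\<phi> ` U \<subseteq> topspace X"
    and "homeomorphic_map (subtopology euclidean U) (subtopology X (\<phi> ` U)) \<phi>"
    and "smooth_on U (f \<circ> \<phi>)"
    and "\<And>u. u \<in> U \<Longrightarrow> \<exists>D. ((f \<circ> \<phi>) has_derivative D) (at u) \<and> inj D"
  using assms openin_subset unfolding closed_immersed_manifold_def by fast+

lemma closed_immersed_manifold_continuous_map:
  assumes "closed_immersed_manifold X A f"
  shows "continuous_map X euclidean f"
proof (rule pasting_lemma[where I = A and T = "\<lambda>(U, \<phi>). \<phi> ` U" and f = "\<lambda>_. f"])
  fix c assume "c \<in> A"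
  then obtain U \<phi> where c: "c = (U, \<phi>)" "(U, \<phi>) \<in> A"
    by (cases c) auto
  note chart = closed_immersed_manifold_chartD[OF assms c(2)]
  show "openin X (case c of (U, \<phi>) \<Rightarrow> \<phi> ` U)"
    using chart(2) c(1) by simp
  have "continuous_on U (f \<circ> \<phi>)"
    using chart(6) by (meson continuous_at_imp_continuous_on has_derivative_continuous)
  then have "continuous_map (subtopology X (\<phi> ` U)) euclidean f"
    using chart(4) by (intro continuous_compose_quotient_map[of _ _ \<phi>]) (auto simp: homeomorphic_map_def)
  then show "continuous_map (subtopology X (case c of (U, \<phi>) \<Rightarrow> \<phi> ` U)) euclidean f"
    using c(1) by simp
next
  show "\<exists>c. c \<in> A \<and> x \<in> (case c of (U, \<phi>) \<Rightarrow> \<phi> ` U) \<and> f x = f x" if "x \<in> topspace X" for x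
    using that assms unfolding closed_immersed_manifold_def by auto
qed auto

lemma closed_immersed_manifold_farthest_point:
  assumes "closed_immersed_manifold X A f"
  obtains x0 where "x0 \<in> topspace X" "\<And>x. x \<in> topspace X \<Longrightarrow> norm (f x - P) \<le> norm (f x0 - P)"
proof (rule compact_space_attains_max)
  show "compact_space X" "topspace X \<noteq> {}"
    using assms unfolding closed_immersed_manifold_def by blast+
  show "continuous_map X euclidean (\<lambda>x. norm (f x - P))"
    by (intro continuous_intros closed_immersed_manifold_continuous_map[OF assms])
qed (rule that)

theorem mainTheorem14:
  fixes X :: "'a topology"
    and A :: "((real^'m::finite) set \<times> (real^'m \<Rightarrow> 'a)) set"
    and f :: "'a \<Rightarrow> (real^'d::finite) \<times> (real^'d)"
  assumes "closed_immersed_manifold X A f"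
    and "CARD('m) \<ge> CARD('d)"
  shows "condition_LL X A f"
proof (rule ccontr)
  assume "\<not> condition_LL X A f"
  then obtain P where radial: "\<And>x. x \<in> topspace X \<Longrightarrow> tangent_space A f x \<subseteq> symp_compl (f x - P)"
    unfolding condition_LL_def by blast
  obtain x0 where "x0 \<in> topspace X"
    and farthest: "\<And>x. x \<in> topspace X \<Longrightarrow> norm (f x - P) \<le> norm (f x0 - P)"
    using closed_immersed_manifold_farthest_point[OF assms(1)] by blast
  then obtain U \<phi> u0 where "(U, \<phi>) \<in> A" "u0 \<in> U" "\<phi> u0 = x0"
    using assms(1) unfolding closed_immersed_manifold_def by auto
  note chart = closed_immersed_manifold_chartD[OF assms(1) this(1)]
  obtain D where D: "((f \<circ> \<phi>) has_derivative D) (at u0)" "inj D"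
    using chart(6)[OF \<open>u0 \<in> U\<close>] by blast
  have "(f \<circ> \<phi>) u0 - P \<in> range D"
  proof (rule radial_vector_mem_derivative_range[OF chart(1) \<open>u0 \<in> U\<close> chart(5) _ D assms(2)])
    fix x D' h assume "x \<in> U" "((f \<circ> \<phi>) has_derivative D') (at x)"
    then have "D' h \<in> tangent_space A f (\<phi> x)"
      using \<open>(U, \<phi>) \<in> A\<close> unfolding tangent_space_def by blast
    then show "omega (D' h) ((f \<circ> \<phi>) x - P) = 0"
      using radial[of "\<phi> x"] chart(3) \<open>x \<in> U\<close> by (auto simp: symp_compl_def)
  qed
  moreover have "((f \<circ> \<phi>) u0 - P) \<bullet> D h = 0" for h
    using chart(3) \<open>\<phi> u0 = x0\<close> farthest
    by (intro local_max_norm_diff_orthogonal[OF D(1) chart(1) \<open>u0 \<in> U\<close>]) auto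
  ultimately have "norm (f x0 - P) = 0"
    using \<open>\<phi> u0 = x0\<close> by (metis comp_apply inner_eq_zero_iff norm_zero rangeE)
  then have "\<forall>x\<in>U. (f \<circ> \<phi>) x = P"
    using farthest chart(3) by fastforce
  then show False
    using inj_derivative_not_constant_on[OF D chart(1) \<open>u0 \<in> U\<close>] by blast
qed

end
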